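(* Let $d$ be an odd positive integer. Regular 3-designs of size $n$ on $S^d$ exist when (i) $n$ is even and $n \ge 2d+2$; (ii) $n$ is odd and $n \ge 3d+2$; and (iii) $n$ is odd and $n \ge \frac{p}{p+1}(3d+3)$, where $p$ is a divisor of $n$ which is congruent to $5 \bmod 6$. In particular, there are regular 3-designs of size $n$ on $S^d$ when $n$ is an odd integer divisible by 5 with $n \ge 5(d+1)/2$.
   Context: For positive integers $n$ and $m$, $s(m) = \big(\sin(\tfrac{2\pi}{n}km)\big)_{k=1}^n$, $c(m) = \big(\cos(\tfrac{2\pi}{n}km)\big)_{k=1}^n$. A set $S$ of integers is a Sidon-type set of strength $t$ in $\mathbb{Z}_n$ if no non-trivial sum $\varepsilon_1x_1+\cdots+\varepsilon_tx_t$ with $\varepsilon_i\in\{0,\pm1\}$, $x_i \in S$ (not necessarily distinct) is $\equiv 0 \bmod n$; non-trivial means some $\varepsilon_i\ne0$ and no element appears with both coefficients $+1$ and $-1$. For $d$ odd and $e=(d+1)/2$, a regular 3-design of size $n$ on $S^d$ is the collection of the $n$ column vectors of $\sqrt{2/(d+1)}\,A(S)$, where $S=\{m_1,\dots,m_e\}$ is a set of $e$ integers forming a Sidon-type set of strength 3 in $\mathbb{Z}_n$, and $A(S)$ is the $2e\times n$ matrix with rows $s(m_1),c(m_1),\dots,s(m_e),c(m_e)$. *)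

theory Defs
  imports Complex_Main "HOL-Number_Theory.Cong"
begin

definition sidon_type :: "nat \<Rightarrow> nat \<Rightarrow> int set \<Rightarrow> bool" where
  "sidon_type n t S \<longleftrightarrow>
     (\<forall>(x :: nat \<Rightarrow> int) (\<epsilon> :: nat \<Rightarrow> int).
        (\<forall>i<t. x i \<in> S \<and> \<epsilon> i \<in> {-1, 0, 1}) \<and>
        (\<exists>i<t. \<epsilon> i \<noteq> 0) \<and>
        \<not> (\<exists>i<t. \<exists>j<t. x i = x j \<and> \<epsilon> i = 1 \<and> \<epsilon> j = -1)
        \<longrightarrow> \<not> [(\<Sum>i<t. \<epsilon> i * x i) = 0] (mod int n))"

text \<open>The columns of sqrt(2/(d+1)) A(S), where S = {m 0, ..., m (e-1)}, e = (d+1)/2.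
  Column k (k = 1..n) is the vector indexed by 0..d (= 2e-1): coordinate 2j is
  sin(2 pi k m_j / n), coordinate 2j+1 is cos(2 pi k m_j / n).\<close>
definition design_points :: "nat \<Rightarrow> nat \<Rightarrow> (nat \<Rightarrow> int) \<Rightarrow> nat \<Rightarrow> nat \<Rightarrow> real" where
  "design_points d n m k i =
     sqrt (2 / (real d + 1)) *
       (if even i then sin (2 * pi / real n * real k * real_of_int (m (i div 2)))
        else cos (2 * pi / real n * real k * real_of_int (m (i div 2))))"

definition regular_3_design :: "nat \<Rightarrow> nat \<Rightarrow> (nat \<Rightarrow> nat \<Rightarrow> real) \<Rightarrow> bool" where
  "regular_3_design d n X \<longleftrightarrow> odd d \<and>
     (\<exists>m :: nat \<Rightarrow> int. inj_on m {..<(d+1) div 2} \<and>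
        sidon_type n 3 (m ` {..<(d+1) div 2}) \<and>
        (\<forall>k\<in>{1..n}. \<forall>i\<le>d. X k i = design_points d n m k i))"

end

theory Submission
  imports Defs
begin

text \<open>
  Each construction excludes every non-trivial signed sum of three elements of \<open>S\<close> either
  by size or by a congruence. For even \<open>n\<close>, take \<open>S = {1, 3, \<dots>, d}\<close>: signed sums of one
  or three elements are odd, and those of two lie strictly between \<open>-n\<close> and \<open>n\<close>.
  For a divisor \<open>p\<close> of \<open>n\<close> and \<open>6L - 2 \<le> p\<close>, take elements of \<open>[0, n)\<close> whose residues mod \<open>p\<close>
  lie in \<open>[L, 2L - 1]\<close>: apart from plain differences, every signed sum of at most three
  such residues lies strictly between \<open>0\<close> and \<open>p\<close> up to sign, so neither \<open>p\<close> nor \<open>n\<close>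
  divides it. There are \<open>L n / p\<close> such elements; \<open>L = (p + 1) / 6\<close> for \<open>p \<equiv> 5 (mod 6)\<close>
  gives (iii), and \<open>p = n\<close>, \<open>L = (d + 1) / 2\<close> gives (ii).
\<close>

lemma sidon_type_3I:
  fixes S :: "int set"
  assumes single: "\<And>a. a \<in> S \<Longrightarrow> \<not> int n dvd a"
    and pair_sum: "\<And>a b. a \<in> S \<Longrightarrow> b \<in> S \<Longrightarrow> \<not> int n dvd a + b"
    and pair_diff: "\<And>a b. a \<in> S \<Longrightarrow> b \<in> S \<Longrightarrow> a \<noteq> b \<Longrightarrow> \<not> int n dvd a - b"
    and triple_sum: "\<And>a b c. a \<in> S \<Longrightarrow> b \<in> S \<Longrightarrow> c \<in> S \<Longrightarrow> \<not> int n dvd a + b + c"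
    and triple_diff: "\<And>a b c. a \<in> S \<Longrightarrow> b \<in> S \<Longrightarrow> c \<in> S \<Longrightarrow> a \<noteq> c \<Longrightarrow> b \<noteq> c
      \<Longrightarrow> \<not> int n dvd a + b - c"
  shows "sidon_type n 3 S"
  unfolding sidon_type_def
proof (intro allI impI notI)
  fix x \<epsilon> :: "nat \<Rightarrow> int"
  assume "(\<forall>i<3. x i \<in> S \<and> \<epsilon> i \<in> {-1, 0, 1}) \<and> (\<exists>i<3. \<epsilon> i \<noteq> 0) \<and>
    \<not> (\<exists>i<3. \<exists>j<3. x i = x j \<and> \<epsilon> i = 1 \<and> \<epsilon> j = -1)"
    and "[(\<Sum>i<3. \<epsilon> i * x i) = 0] (mod int n)"
  then have x: "x 0 \<in> S" "x 1 \<in> S" "x 2 \<in> S"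
    and \<epsilon>: "\<epsilon> 0 \<in> {-1, 0, 1}" "\<epsilon> 1 \<in> {-1, 0, 1}" "\<epsilon> 2 \<in> {-1, 0, 1}"
    and nontrivial: "\<epsilon> 0 \<noteq> 0 \<or> \<epsilon> 1 \<noteq> 0 \<or> \<epsilon> 2 \<noteq> 0"
    and no_cancel: "\<And>i j. i < 3 \<Longrightarrow> j < 3 \<Longrightarrow> \<epsilon> i = 1 \<Longrightarrow> \<epsilon> j = -1 \<Longrightarrow> x i \<noteq> x j"
    and dvd: "int n dvd \<epsilon> 0 * x 0 + \<epsilon> 1 * x 1 + \<epsilon> 2 * x 2"
    by (auto simp: eval_nat_numeral less_Suc_eq cong_0_iff)
  have signed: "\<not> int n dvd z \<and> \<not> int n dvd - z" if "\<not> int n dvd z" for z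
    using that by simp
  \<comment> \<open>Up to a global sign, each of the 26 sign patterns is one of the five excluded shapes.\<close>
  show False
    using \<epsilon> nontrivial dvd no_cancel[of 0 1] no_cancel[of 1 0] no_cancel[of 0 2] no_cancel[of 2 0]
      no_cancel[of 1 2] no_cancel[of 2 1]
      signed[OF single[OF x(1)]] signed[OF single[OF x(2)]] signed[OF single[OF x(3)]]
      signed[OF pair_sum[OF x(1) x(2)]] signed[OF pair_sum[OF x(1) x(3)]]
      signed[OF pair_sum[OF x(2) x(3)]]
      signed[OF pair_diff[OF x(1) x(2)]] signed[OF pair_diff[OF x(1) x(3)]]
      signed[OF pair_diff[OF x(2) x(3)]]
      signed[OF triple_sum[OF x]]
      signed[OF triple_diff[OF x(1) x(2) x(3)]] signed[OF triple_diff[OF x(1) x(3) x(2)]]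
      signed[OF triple_diff[OF x(2) x(3) x(1)]]
    by (auto simp: algebra_simps)
qed

lemma not_dvd_if_cong_between:
  fixes z w p :: int
  assumes "[z = w] (mod p)" "0 < w" "w < p"
  shows "\<not> p dvd z"
  using assms zdvd_not_zless cong_dvd_iff by blast

lemma sidon_type_3_of_odd_below_half:
  fixes n :: nat and S :: "int set"
  assumes n: "even n" and S: "\<And>s. s \<in> S \<Longrightarrow> odd s \<and> 0 < s \<and> 2 * s < int n"
  shows "sidon_type n 3 S"
proof (rule sidon_type_3I)
  have odd_not_dvd: "\<not> int n dvd z" if "odd z" for z
    using n that dvd_trans by (metis even_of_nat)
  show "\<not> int n dvd a" if "a \<in> S" for a
    using S[OF that] by (simp add: zdvd_not_zless)
  show "\<not> int n dvd a + b" if "a \<in> S" "b \<in> S" for a b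
    using S[OF that(1)] S[OF that(2)] by (simp add: zdvd_not_zless)
  show "\<not> int n dvd a - b" if "a \<in> S" "b \<in> S" "a \<noteq> b" for a b
    using S[OF that(1)] S[OF that(2)] that(3) cong_less_imp_eq_int[of a "int n" b]
    by (auto simp: cong_iff_dvd_diff)
  show "\<not> int n dvd a + b + c" if "a \<in> S" "b \<in> S" "c \<in> S" for a b c
    using S that odd_not_dvd by simp
  show "\<not> int n dvd a + b - c" if "a \<in> S" "b \<in> S" "c \<in> S" for a b c
    using S that odd_not_dvd by simp
qed

lemma sidon_type_3_of_residues:
  fixes n :: nat and p L :: int and S :: "int set"
  assumes p: "p dvd int n" and L: "1 \<le> L" "6 * L - 2 \<le> p"
    and residues: "\<And>s. s \<in> S \<Longrightarrow> s mod p \<in> {L..2 * L - 1}"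
    and distinct: "inj_on (\<lambda>s. s mod int n) S"
  shows "sidon_type n 3 S"
proof (rule sidon_type_3I)
  \<comment> \<open>Computed on residues in \<open>[L, 2L - 1]\<close>, every excluded shape except \<open>a - b\<close> lies in \<open>[1, 6L - 3]\<close>.\<close>
  have not_dvd: "\<not> int n dvd z" if "[z = w] (mod p)" "0 < w" "w < p" for z w
    using not_dvd_if_cong_between[OF that] p dvd_trans by blast
  have r: "L \<le> s mod p" "s mod p \<le> 2 * L - 1" if "s \<in> S" for s
    using residues[OF that] by auto
  have mod_cong: "[s = s mod p] (mod p)" for s
    by (simp add: cong_def)
  show "\<not> int n dvd a" if "a \<in> S" for a
    using not_dvd[OF mod_cong[of a]] r[OF that] L by simp
  show "\<not> int n dvd a + b" if "a \<in> S" "b \<in> S" for a b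
    using not_dvd[OF cong_add[OF mod_cong mod_cong]] r[OF that(1)] r[OF that(2)] L by simp
  show "\<not> int n dvd a - b" if "a \<in> S" "b \<in> S" "a \<noteq> b" for a b
    using distinct that by (auto simp: inj_on_def mod_eq_dvd_iff)
  show "\<not> int n dvd a + b + c" if "a \<in> S" "b \<in> S" "c \<in> S" for a b c
    using not_dvd[OF cong_add[OF cong_add[OF mod_cong mod_cong] mod_cong]]
      r[OF that(1)] r[OF that(2)] r[OF that(3)] L
    by simp
  show "\<not> int n dvd a + b - c" if "a \<in> S" "b \<in> S" "c \<in> S" for a b c
    using not_dvd[OF cong_diff[OF cong_add[OF mod_cong mod_cong] mod_cong]]
      r[OF that(1)] r[OF that(2)] r[OF that(3)] L
    by simp
qed

lemma regular_3_design_if_sidon_type: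
  assumes "odd d" "inj_on m {..<(d + 1) div 2}" "sidon_type n 3 (m ` {..<(d + 1) div 2})"
  shows "\<exists>X. regular_3_design d n X"
  using assms unfolding regular_3_design_def by blast

lemma regular_3_design_even_size:
  fixes d n :: nat
  assumes d: "odd d" and n: "even n" "2 * d + 2 \<le> n"
  shows "\<exists>X. regular_3_design d n X"
proof (rule regular_3_design_if_sidon_type[OF d])
  let ?m = "\<lambda>j::nat. 2 * int j + 1"
  show "inj_on ?m {..<(d + 1) div 2}"
    by (auto simp: inj_on_def)
  have "2 * ?m j < int n" if "j < (d + 1) div 2" for j
    using that d n(2) by (elim oddE) auto
  then show "sidon_type n 3 (?m ` {..<(d + 1) div 2})"
    by (intro sidon_type_3_of_odd_below_half[OF n(1)]) auto
qed

definition residue_block :: "nat \<Rightarrow> nat \<Rightarrow> nat \<Rightarrow> int" where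
  "residue_block p L j = int (L + j mod L + p * (j div L))"

lemma add_mod_less:
  fixes j L p :: nat
  assumes "0 < L" "2 * L \<le> p"
  shows "L + j mod L < p"
  using mod_less_divisor[OF assms(1), of j] assms(2) by linarith

lemma residue_block_mod_div:
  assumes "0 < L" "2 * L \<le> p"
  shows "residue_block p L j mod int p = int (L + j mod L)"
    and "residue_block p L j div int p = int (j div L)"
  using add_mod_less[OF assms, of j] unfolding residue_block_def
  by (simp_all flip: of_nat_mod of_nat_div)

lemma inj_residue_block:
  assumes "0 < L" "2 * L \<le> p"
  shows "inj (residue_block p L)"
proof (rule injI)
  fix i j assume "residue_block p L i = residue_block p L j"
  then have "i mod L = j mod L" "i div L = j div L"
    using residue_block_mod_div[OF assms] by (metis add_left_cancel of_nat_eq_iff)+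
  then show "i = j"
    by (metis div_mult_mod_eq)
qed

lemma residue_block_less:
  assumes "0 < L" "2 * L \<le> p" "j < L * q"
  shows "residue_block p L j < int (p * q)"
proof -
  have "Suc (j div L) \<le> q"
    using assms by (simp add: less_mult_imp_div_less Suc_leI mult.commute)
  then have "p * Suc (j div L) \<le> p * q"
    by (rule mult_le_mono2)
  then have "L + j mod L + p * (j div L) < p * q"
    using add_mod_less[OF assms(1,2), of j] by simp
  then show ?thesis
    unfolding residue_block_def by (metis of_nat_less_iff)
qed

lemma regular_3_design_of_residue_block:
  fixes d n p L :: nat
  assumes d: "odd d" and p: "p dvd n" and L: "1 \<le> L" "6 * L \<le> p + 2"
    and size: "(d + 1) div 2 \<le> L * (n div p)"
  shows "\<exists>X. regular_3_design d n X"
proof (rule regular_3_design_if_sidon_type[OF d])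
  let ?S = "residue_block p L ` {..<(d + 1) div 2}"
  have L': "0 < L" "2 * L \<le> p"
    using L by linarith+
  show "inj_on (residue_block p L) {..<(d + 1) div 2}"
    using inj_residue_block[OF L'] by (rule inj_on_subset) simp
  have range: "0 \<le> residue_block p L j \<and> residue_block p L j < int n"
    if "j < (d + 1) div 2" for j
  proof
    show "0 \<le> residue_block p L j"
      by (simp add: residue_block_def)
    have "j < L * (n div p)"
      using that size by linarith
    then show "residue_block p L j < int n"
      using residue_block_less[OF L'] p by (metis dvd_mult_div_cancel)
  qed
  show "sidon_type n 3 ?S"
  proof (rule sidon_type_3_of_residues)
    show "int p dvd int n" "1 \<le> int L" "6 * int L - 2 \<le> int p"
      using p L by simp_all
    show "s mod int p \<in> {int L..2 * int L - 1}" if "s \<in> ?S" for s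
      using that residue_block_mod_div(1)[OF L'] mod_less_divisor[OF L'(1)] by force
    show "inj_on (\<lambda>s. s mod int n) ?S"
    proof (rule inj_onI)
      fix s t assume "s \<in> ?S" "t \<in> ?S" "s mod int n = t mod int n"
      then obtain i j where "i < (d + 1) div 2" "s = residue_block p L i"
        and "j < (d + 1) div 2" "t = residue_block p L j"
        by blast
      with \<open>s mod int n = t mod int n\<close> show "s = t"
        using range[of i] range[of j] by simp
    qed
  qed
qed

lemma regular_3_design_of_divisor:
  fixes d n p :: nat
  assumes d: "odd d" and p: "p dvd n" "p mod 6 = 5"
    and n: "real n \<ge> real p / (real p + 1) * (3 * real d + 3)"
  shows "\<exists>X. regular_3_design d n X"
proof (rule regular_3_design_of_residue_block[OF d p(1)])
  define L where "L = (p + 1) div 6"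
  have L: "6 * L = p + 1"
    using p(2) unfolding L_def by presburger
  then show "1 \<le> L" "6 * L \<le> p + 2"
    by linarith+
  obtain q where q: "n = p * q"
    using p(1) by blast
  have "0 < p"
    using p(2) by (cases p) simp_all
  have "real (p * (3 * d + 3)) \<le> real (p * (q * (p + 1)))"
    using n unfolding q by (simp add: field_simps)
  then have "p * (3 * d + 3) \<le> p * (q * (p + 1))"
    by (simp only: of_nat_le_iff)
  then have "3 * d + 3 \<le> q * (6 * L)"
    using \<open>0 < p\<close> L by simp
  moreover have "3 * d + 3 = 6 * ((d + 1) div 2)"
    using d by (elim oddE) simp
  ultimately have "(d + 1) div 2 \<le> L * q"
    by (simp add: mult.commute)
  then show "(d + 1) div 2 \<le> L * (n div p)"
    using q \<open>0 < p\<close> by simp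
qed

theorem proposition5p3:
  fixes d n :: nat
  assumes "odd d"
  shows "(even n \<and> n \<ge> 2 * d + 2 \<longrightarrow> (\<exists>X. regular_3_design d n X))
    \<and> (odd n \<and> n \<ge> 3 * d + 2 \<longrightarrow> (\<exists>X. regular_3_design d n X))
    \<and> (\<forall>p::nat. odd n \<and> p dvd n \<and> p mod 6 = 5 \<and>
          real n \<ge> real p / (real p + 1) * (3 * real d + 3)
          \<longrightarrow> (\<exists>X. regular_3_design d n X))
    \<and> (odd n \<and> 5 dvd n \<and> real n \<ge> 5 * (real d + 1) / 2
          \<longrightarrow> (\<exists>X. regular_3_design d n X))"
proof (intro conjI impI allI)
  show "\<exists>X. regular_3_design d n X" if "even n \<and> n \<ge> 2 * d + 2"
    using regular_3_design_even_size[OF assms] that by blast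
  show "\<exists>X. regular_3_design d n X" if "odd n \<and> n \<ge> 3 * d + 2"
  proof (rule regular_3_design_of_residue_block[OF assms dvd_refl])
    show "1 \<le> (d + 1) div 2" "6 * ((d + 1) div 2) \<le> n + 2"
      using assms that by (elim oddE; simp)+
    show "(d + 1) div 2 \<le> (d + 1) div 2 * (n div n)"
      using that by simp
  qed
  show "\<exists>X. regular_3_design d n X"
    if "odd n \<and> p dvd n \<and> p mod 6 = 5 \<and> real n \<ge> real p / (real p + 1) * (3 * real d + 3)"
    for p
    using regular_3_design_of_divisor[OF assms] that by blast
  show "\<exists>X. regular_3_design d n X" if "odd n \<and> 5 dvd n \<and> real n \<ge> 5 * (real d + 1) / 2"
    using regular_3_design_of_divisor[OF assms, of 5] that by simp
qed

end
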